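(* For indices $\boldsymbol{k}$ and $\boldsymbol{l}$ (tuples of positive integers), the following holds in $\mathfrak{H}^1[[t]]$: $$\widehat{\phi}(z_{\boldsymbol{k}}ш z_{\boldsymbol{l}})=(-1)^{\mathrm{wt}(\boldsymbol{l})}\sum_{\boldsymbol{l}'\in\mathbb{Z}_{\ge0}^{\mathrm{dep}(\boldsymbol{l})}}b\binom{\boldsymbol{l}}{\boldsymbol{l}'}\,\widehat{\phi}\bigl(z_{\boldsymbol{k}}z_{\overline{\boldsymbol{l}+\boldsymbol{l}'}}\bigr)t^{\mathrm{wt}(\boldsymbol{l}')}.$$ In particular $\phi(z_{\boldsymbol{k}}ш z_{\boldsymbol{l}})=(-1)^{\mathrm{wt}(\boldsymbol{l})}\phi(z_{\boldsymbol{k}}z_{\overline{\boldsymbol{l}}})$.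
   Context: $\mathfrak{H}=\mathbb{Q}\langle x,y\rangle$, $\mathfrak{H}^1=\mathbb{Q}+y\mathfrak{H}$, $z_k=yx^{k-1}$, $z_{\boldsymbol{k}}=z_{k_1}\cdots z_{k_r}$, $z_\varnothing=1$. The shuffle product $ш$: $aш1=1шa=a$ and $(a_1u_1)ш(a_2u_2)=(a_1шa_2u_2)u_1+(a_1u_1шa_2)u_2$ for $a_i\in\mathfrak{H}$, $u_i\in\{x,y\}$, extended $\mathbb{Q}[[t]]$-bilinearly. For tuples $\boldsymbol{k}=(k_1,\dots,k_r)$, $\boldsymbol{l}=(l_1,\dots,l_r)$ of nonnegative integers: $\mathrm{wt}(\boldsymbol{k})=\sum k_i$, $\mathrm{dep}(\boldsymbol{k})=r$, $\overline{\boldsymbol{k}}=(k_r,\dots,k_1)$, $\boldsymbol{k}+\boldsymbol{l}$ componentwise, $b\binom{\boldsymbol{k}}{\boldsymbol{l}}=\prod_i\binom{k_i+l_i-1}{l_i}$ with $\binom{l-1}{l}=\delta_{l,0}$, $\boldsymbol{k}_{[i]}=(k_1,\dots,k_i)$, $\boldsymbol{k}^{[i]}=(k_{i+1},\dots,k_r)$. $\widehat{\phi}:\mathfrak{H}^1[[t]]\to\mathfrak{H}^1[[t]]$ is the $\mathbb{Q}[[t]]$-linear map $$\widehat{\phi}(z_{\boldsymbol{k}})=\sum_{i=0}^r(-1)^{\mathrm{wt}(\boldsymbol{k}^{[i]})}z_{\boldsymbol{k}_{[i]}}\,ш\sum_{\boldsymbol{l}\in\mathbb{Z}_{\ge0}^{r-i}}b\binom{\boldsymbol{k}^{[i]}}{\boldsymbol{l}}z_{\overline{\boldsymbol{k}^{[i]}+\boldsymbol{l}}}\,t^{\mathrm{wt}(\boldsymbol{l})},$$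 and $\phi:\mathfrak{H}^1\to\mathfrak{H}^1$ is its constant term in $t$ restricted to $\mathfrak{H}^1$, i.e. $\phi(z_{\boldsymbol{k}})=\sum_{i=0}^r(-1)^{\mathrm{wt}(\boldsymbol{k}^{[i]})}z_{\boldsymbol{k}_{[i]}}ш z_{\overline{\boldsymbol{k}^{[i]}}}$. *)

theory Defs
  imports Complex_Main
begin

text \<open>Elements of the free algebra
  H = Q<x,y> are represented by their (finitely supported) coefficient functions
  word => rat; elements of H[[t]] by functions nat => word => rat, where
  F n is the coefficient of t^n.\<close>

datatype letter = X | Y

type_synonym word = "letter list"
type_synonym poly = "word \<Rightarrow> rat"
type_synonym pser = "nat \<Rightarrow> word \<Rightarrow> rat"

text \<open>Shuffle of words (multiset of resulting words, as a list), following the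
  recursion (a1 u1) sh (a2 u2) = (a1 sh a2 u2) u1 + (a1 u1 sh a2) u2 on last letters.
  shw_rev works on reversed words.\<close>
fun shw_rev :: "word \<Rightarrow> word \<Rightarrow> word list" where
  "shw_rev [] v = [v]"
| "shw_rev u [] = [u]"
| "shw_rev (a # u) (b # v) =
     map ((#) a) (shw_rev u (b # v)) @ map ((#) b) (shw_rev (a # u) v)"

definition shw :: "word \<Rightarrow> word \<Rightarrow> word list" where
  "shw u v = map rev (shw_rev (rev u) (rev v))"

definition supp :: "poly \<Rightarrow> word set" where
  "supp P = {w. P w \<noteq> 0}"

definition sh :: "poly \<Rightarrow> poly \<Rightarrow> poly" where
  "sh P Q = (\<lambda>w. \<Sum>u\<in>supp P. \<Sum>v\<in>supp Q. P u * Q v * of_nat (count_list (shw u v) w))"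

definition mon :: "word \<Rightarrow> poly" where
  "mon w = (\<lambda>v. if v = w then 1 else 0)"

definition zw :: "nat list \<Rightarrow> word" where
  "zw ks = concat (map (\<lambda>k. Y # replicate (k - 1) X) ks)"

definition wt :: "nat list \<Rightarrow> nat" where
  "wt ks = sum_list ks"

definition ladd :: "nat list \<Rightarrow> nat list \<Rightarrow> nat list" where
  "ladd ks ls = map2 (+) ks ls"

text \<open>b(k;l) = prod (k_i + l_i - 1 choose l_i); with natural subtraction this gives
  the convention (l-1 choose l) = delta_{l,0} for k_i = 0.\<close>
definition bb :: "nat list \<Rightarrow> nat list \<Rightarrow> nat" where
  "bb ks ls = prod_list (map2 (\<lambda>k l. (k + l - 1) choose l) ks ls)"

definition tuples :: "nat \<Rightarrow> nat \<Rightarrow> nat list set" where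
  "tuples r n = {ls. length ls = r \<and> sum_list ls = n}"

text \<open>The series sum_{l in Z_{>=0}^r} f(l) t^{wt l}, where each f(l) is in H[[t]].\<close>
definition tsum_tuples :: "nat \<Rightarrow> (nat list \<Rightarrow> pser) \<Rightarrow> pser" where
  "tsum_tuples r f = (\<lambda>n w. \<Sum>m\<le>n. \<Sum>ls\<in>tuples r m. f ls (n - m) w)"

definition const_ser :: "poly \<Rightarrow> pser" where
  "const_ser P = (\<lambda>n. if n = 0 then P else (\<lambda>_. 0))"

definition shS :: "pser \<Rightarrow> pser \<Rightarrow> pser" where
  "shS F G = (\<lambda>n w. \<Sum>m\<le>n. sh (F m) (G (n - m)) w)"

definition phihat_idx :: "nat list \<Rightarrow> pser" where
  "phihat_idx ks = (\<lambda>n w. \<Sum>i\<le>length ks.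
     (- 1) ^ wt (drop i ks) *
     shS (const_ser (mon (zw (take i ks))))
         (tsum_tuples (length ks - i)
            (\<lambda>ls. const_ser (\<lambda>v. of_nat (bb (drop i ks) ls) *
                              mon (zw (rev (ladd (drop i ks) ls))) v))) n w)"

definition idx :: "word \<Rightarrow> nat list" where
  "idx w = (THE ks. (\<forall>k\<in>set ks. 0 < k) \<and> zw ks = w)"

definition phihat :: "pser \<Rightarrow> pser" where
  "phihat F = (\<lambda>n w. \<Sum>m\<le>n. \<Sum>u\<in>supp (F m). F m u * phihat_idx (idx u) (n - m) w)"

definition phi :: "poly \<Rightarrow> poly" where
  "phi P = phihat (const_ser P) 0"

end

theory Submission
  imports Defs "HOL-Computational_Algebra.Formal_Power_Series"
begin

(* We work with arbitrary word series with coefficients in Q[[t]], on which shuffle and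
   concatenation are given by first-letter recursions, and model phi-hat by an operator
   phi_ser defined by such a recursion as well.  The heart of the proof is that under
   phi_ser a block z_m = y x^(m-1) at the end of the right factor of a shuffle can be moved
   to the end of the left factor, where it turns into its dual block
   (-1)^m sum_l binom(m+l-1, l) t^l z_(m+l).  Moving the blocks of z_l one by one, starting
   with the last, turns phi-hat(z_k sh z_l) into phi-hat(z_k D(l)) with
   D(l) = (-1)^wt(l) sum_l' b(l;l') t^wt(l') z_rev(l+l'); expanding D(l) gives the theorem,
   and its constant term in t gives the statement for phi. *)

section \<open>Word series, shuffle and concatenation\<close>

text \<open>\<open>F :: ser\<close> stands for the possibly infinite sum of \<open>F w \<cdot> w\<close> over all words \<open>w\<close>.\<close>
type_synonym ser = "word \<Rightarrow> rat fps"

fun shuffle :: "ser \<Rightarrow> ser \<Rightarrow> ser" where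
  "shuffle F G [] = F [] * G []"
| "shuffle F G (a # w) = shuffle (\<lambda>v. F (a # v)) G w + shuffle F (\<lambda>v. G (a # v)) w"

declare shuffle.simps(2)[simp del]
lemmas shuffle_Cons = shuffle.simps(2)

lemma shuffle_linear_at:
  "shuffle (\<lambda>w. 0) H v = 0"
  "shuffle (\<lambda>w. F w + G w) H v = shuffle F H v + shuffle G H v"
  "shuffle (\<lambda>w. F w - G w) H v = shuffle F H v - shuffle G H v"
  "shuffle (\<lambda>w. - F w) H v = - shuffle F H v"
  "shuffle (\<lambda>w. c * F w) H v = c * shuffle F H v"
  "shuffle (\<lambda>w. F w * c) H v = c * shuffle F H v"
  "shuffle H (\<lambda>w. 0) v = 0"
  "shuffle H (\<lambda>w. F w + G w) v = shuffle H F v + shuffle H G v"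
  "shuffle H (\<lambda>w. F w - G w) v = shuffle H F v - shuffle H G v"
  "shuffle H (\<lambda>w. - F w) v = - shuffle H F v"
  "shuffle H (\<lambda>w. c * F w) v = c * shuffle H F v"
  "shuffle H (\<lambda>w. F w * c) v = c * shuffle H F v"
  by (induction v arbitrary: F G H) (simp_all add: shuffle_Cons algebra_simps)

lemmas shuffle_linear[simp] = shuffle_linear_at[abs_def]

lemma shuffle_commute: "shuffle F G = shuffle G F"
proof
  fix v show "shuffle F G v = shuffle G F v"
    by (induction v arbitrary: F G) (simp_all add: shuffle_Cons algebra_simps)
qed

lemma shuffle_assoc: "shuffle (shuffle F G) H = shuffle F (shuffle G H)"
proof
  fix v show "shuffle (shuffle F G) H v = shuffle F (shuffle G H) v"
    by (induction v arbitrary: F G H) (simp_all add: shuffle_Cons algebra_simps)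
qed

lemma shuffle_left_commute: "shuffle F (shuffle G H) = shuffle G (shuffle F H)"
  by (metis shuffle_assoc shuffle_commute)

lemma shuffle_snoc:
  "shuffle F G (v @ [a]) = shuffle (\<lambda>u. F (u @ [a])) G v + shuffle F (\<lambda>u. G (u @ [a])) v"
  by (induction v arbitrary: F G) (simp_all add: shuffle_Cons algebra_simps)

fun conc :: "ser \<Rightarrow> ser \<Rightarrow> ser" where
  "conc F G [] = F [] * G []"
| "conc F G (a # w) = conc (\<lambda>v. F (a # v)) G w + F [] * G (a # w)"

declare conc.simps(2)[simp del]
lemmas conc_Cons = conc.simps(2)

lemma conc_linear_at:
  "conc (\<lambda>w. 0) H v = 0"
  "conc (\<lambda>w. F w + G w) H v = conc F H v + conc G H v"
  "conc (\<lambda>w. F w - G w) H v = conc F H v - conc G H v"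
  "conc (\<lambda>w. - F w) H v = - conc F H v"
  "conc (\<lambda>w. c * F w) H v = c * conc F H v"
  "conc (\<lambda>w. F w * c) H v = c * conc F H v"
  "conc H (\<lambda>w. 0) v = 0"
  "conc H (\<lambda>w. F w + G w) v = conc H F v + conc H G v"
  "conc H (\<lambda>w. F w - G w) v = conc H F v - conc H G v"
  "conc H (\<lambda>w. - F w) v = - conc H F v"
  "conc H (\<lambda>w. c * F w) v = c * conc H F v"
  "conc H (\<lambda>w. F w * c) v = c * conc H F v"
  by (induction v arbitrary: F G H) (simp_all add: conc_Cons algebra_simps)

lemmas conc_linear[simp] = conc_linear_at[abs_def]

lemma conc_assoc: "conc (conc F G) H = conc F (conc G H)"
proof
  fix v show "conc (conc F G) H v = conc F (conc G H) v"
    by (induction v arbitrary: F G H) (simp_all add: conc_Cons algebra_simps)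
qed

lemma conc_snoc: "conc F G (v @ [a]) = conc F (\<lambda>u. G (u @ [a])) v + G [] * F (v @ [a])"
  by (induction v arbitrary: F G) (simp_all add: conc_Cons algebra_simps)

lemma conc_eq_sum: "conc F G w = (\<Sum>i\<le>length w. F (take i w) * G (drop i w))"
  by (induction w arbitrary: F)
     (simp_all add: conc_Cons sum.atMost_Suc_shift del: sum.atMost_Suc)

definition mon_ser :: "word \<Rightarrow> ser" where
  "mon_ser u = (\<lambda>w. if w = u then 1 else 0)"

lemma mon_ser_Cons_deriv:
  "(\<lambda>u. mon_ser (a # w) (b # u)) = (if a = b then mon_ser w else (\<lambda>u. 0))"
  "(\<lambda>u. mon_ser [] (b # u)) = (\<lambda>u. 0)"
  by (auto simp: mon_ser_def)

lemma mon_ser_snoc_deriv: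
  "(\<lambda>u. mon_ser (w @ [a]) (u @ [b])) = (if a = b then mon_ser w else (\<lambda>u. 0))"
  "(\<lambda>u. mon_ser [] (u @ [b])) = (\<lambda>u. 0)"
  by (auto simp: mon_ser_def)

lemma shuffle_unit[simp]: "shuffle (mon_ser []) F = F" "shuffle F (mon_ser []) = F"
proof -
  show "shuffle (mon_ser []) F = F"
  proof
    fix v show "shuffle (mon_ser []) F v = F v"
      by (induction v arbitrary: F) (simp_all add: shuffle_Cons mon_ser_Cons_deriv, simp add: mon_ser_def)
  qed
  then show "shuffle F (mon_ser []) = F"
    by (simp add: shuffle_commute)
qed

lemma conc_mon_ser_left:
  "conc (mon_ser u) G w = (if take (length u) w = u then G (drop (length u) w) else 0)"
proof -
  have "conc (mon_ser u) G w = (\<Sum>i\<le>length w. if i = length u then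
      (if take (length u) w = u then G (drop (length u) w) else 0) else 0)"
    unfolding conc_eq_sum mon_ser_def by (rule sum.cong) auto
  then show ?thesis by (auto dest: arg_cong[of _ _ length])
qed

lemma conc_mon_ser: "conc (mon_ser u) (mon_ser v) = mon_ser (u @ v)"
proof
  fix w show "conc (mon_ser u) (mon_ser v) w = mon_ser (u @ v) w"
    unfolding conc_mon_ser_left by (auto simp: mon_ser_def, metis append_take_drop_id)
qed

lemma conc_unit[simp]: "conc (mon_ser []) F = F" "conc F (mon_ser []) = F"
proof -
  show "conc (mon_ser []) F = F"
    by (simp add: fun_eq_iff conc_mon_ser_left)
  show "conc F (mon_ser []) = F"
  proof
    fix v show "conc F (mon_ser []) v = F v"
      by (induction v arbitrary: F) (simp_all add: conc_Cons mon_ser_def)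
  qed
qed

section \<open>A recursive model of \<open>\<phi>\<close>-hat\<close>

definition geom_x :: ser where
  "geom_x w = (if w = replicate (length w) X then fps_X ^ length w else 0)"

lemma geom_x_simps[simp]:
  "geom_x [] = 1" "geom_x (X # w) = fps_X * geom_x w" "geom_x (Y # w) = 0"
  by (simp_all add: geom_x_def)

definition x_ser :: "(nat \<Rightarrow> rat fps) \<Rightarrow> ser" where
  "x_ser f w = (if w = replicate (length w) X then f (length w) else 0)"

lemma replicate_snoc_iff:
  "(w @ [a] = replicate (length (w @ [a])) b) = (w = replicate (length w) b \<and> a = b)"
  by (induction w) auto

lemma x_ser_simps[simp]:
  "x_ser f [] = f 0"
  "x_ser f (X # w) = x_ser (\<lambda>n. f (Suc n)) w"
  "x_ser f (Y # w) = 0"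
  "x_ser f (w @ [X]) = x_ser (\<lambda>n. f (Suc n)) w"
  "x_ser f (w @ [Y]) = 0"
  by (simp_all only: x_ser_def replicate_snoc_iff) simp_all

lemma x_ser_zero[simp]: "x_ser (\<lambda>n. 0) = (\<lambda>w. 0)"
  by (auto simp: x_ser_def)

lemma x_ser_linear:
  "x_ser (\<lambda>n. f n + g n) = (\<lambda>w. x_ser f w + x_ser g w)"
  "x_ser (\<lambda>n. f n - g n) = (\<lambda>w. x_ser f w - x_ser g w)"
  "x_ser (\<lambda>n. c * f n) = (\<lambda>w. c * x_ser f w)"
  by (auto simp: x_ser_def)

definition y_conc :: "ser \<Rightarrow> ser" where
  "y_conc Q w = (case w of Y # v \<Rightarrow> Q v | _ \<Rightarrow> 0)"

lemma y_conc_simps[simp]: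
  "y_conc Q [] = 0" "y_conc Q (Y # v) = Q v" "y_conc Q (X # v) = 0"
  by (simp_all add: y_conc_def)

lemma y_conc_snoc:
  "(\<lambda>u. y_conc Q (u @ [X])) = y_conc (\<lambda>v. Q (v @ [X]))"
  "(\<lambda>u. y_conc Q (u @ [Y])) = (\<lambda>u. y_conc (\<lambda>v. Q (v @ [Y])) u + Q [] * mon_ser [] u)"
  by (auto simp: fun_eq_iff y_conc_def mon_ser_def split: list.splits letter.splits)

lemma y_conc_zero[simp]: "y_conc (\<lambda>w. 0) = (\<lambda>w. 0)"
  by (auto simp: fun_eq_iff y_conc_def split: list.splits letter.splits)

lemma y_conc_linear:
  "y_conc (\<lambda>w. - F w) = (\<lambda>w. - y_conc F w)"
  "y_conc (\<lambda>w. F w - G w) = (\<lambda>w. y_conc F w - y_conc G w)"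
  "y_conc (\<lambda>w. c * F w) = (\<lambda>w. c * y_conc F w)"
  by (auto simp: fun_eq_iff y_conc_def split: list.splits letter.splits)

lemma conc_y: "conc (mon_ser [Y]) Q = y_conc Q"
  by (auto simp: fun_eq_iff conc_mon_ser_left y_conc_def split: list.splits letter.splits)

text \<open>\<open>ycontr (mon_ser w)\<close> is the sum, over all factorisations \<open>w = p y q\<close>, of the
  shuffle of \<open>p\<close> with the antipode of \<open>q\<close> (\<open>ycontr_mon_ser\<close>).\<close>
fun ycontr :: "ser \<Rightarrow> ser" where
  "ycontr F [] = F [Y]"
| "ycontr F (a # w) = ycontr (\<lambda>v. F (a # v)) w - ycontr (\<lambda>v. F (v @ [a])) w"

lemma ycontr_linear_at:
  "ycontr (\<lambda>w. 0) v = 0"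
  "ycontr (\<lambda>w. F w + G w) v = ycontr F v + ycontr G v"
  "ycontr (\<lambda>w. F w - G w) v = ycontr F v - ycontr G v"
  "ycontr (\<lambda>w. - F w) v = - ycontr F v"
  "ycontr (\<lambda>w. c * F w) v = c * ycontr F v"
  "ycontr (\<lambda>w. F w * c) v = c * ycontr F v"
  by (induction v arbitrary: F G) (simp_all add: algebra_simps)

lemmas ycontr_linear[simp] = ycontr_linear_at[abs_def]

lemma ycontr_shuffle: "ycontr (shuffle F G) = (\<lambda>v. ycontr F v * G [] + F [] * ycontr G v)"
proof
  fix v show "ycontr (shuffle F G) v = ycontr F v * G [] + F [] * ycontr G v"
    by (induction v arbitrary: F G) (simp_all add: shuffle_Cons shuffle_snoc algebra_simps)
qed

lemma ycontr_x_ser[simp]: "ycontr (x_ser f) = (\<lambda>v. 0)"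
proof
  fix v show "ycontr (x_ser f) v = 0"
  proof (induction v arbitrary: f)
    case (Cons a v) then show ?case by (cases a) simp_all
  qed simp
qed

text \<open>On \<open>z_k\<close> this is \<open>\<phi>\<close>-hat (\<open>phihat_idx_eq_phi_ser\<close>).\<close>
fun phi_ser :: "ser \<Rightarrow> ser" where
  "phi_ser F [] = F []"
| "phi_ser F (a # w) =
     phi_ser (\<lambda>v. F (a # v)) w - (if a = Y then shuffle geom_x (ycontr F) w else 0)"

lemma phi_ser_linear_at:
  "phi_ser (\<lambda>w. 0) v = 0"
  "phi_ser (\<lambda>w. F w + G w) v = phi_ser F v + phi_ser G v"
  "phi_ser (\<lambda>w. F w - G w) v = phi_ser F v - phi_ser G v"
  "phi_ser (\<lambda>w. - F w) v = - phi_ser F v"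
  "phi_ser (\<lambda>w. c * F w) v = c * phi_ser F v"
  "phi_ser (\<lambda>w. F w * c) v = c * phi_ser F v"
  by (induction v arbitrary: F G) (simp_all add: algebra_simps)

lemmas phi_ser_linear[simp] = phi_ser_linear_at[abs_def]

section \<open>Moving blocks across a shuffle\<close>

text \<open>\<open>x_ser (x_twist f)\<close> is minus the sum of \<open>(-1)^j f j\<close> times the shuffle of \<open>geom_x\<close>
  with \<open>x^j\<close> (\<open>x_ser_x_twist_kron\<close>); the recursion is the form needed to prove
  \<open>phi_ser_shuffle_x_ser\<close>.\<close>
fun x_twist :: "(nat \<Rightarrow> rat fps) \<Rightarrow> nat \<Rightarrow> rat fps" where
  "x_twist f 0 = - f 0"
| "x_twist f (Suc n) = fps_X * x_twist f n - x_twist (\<lambda>k. f (Suc k)) n"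

lemma x_twist_diff: "x_twist (\<lambda>k. f k - g k) n = x_twist f n - x_twist g n"
proof (induction n arbitrary: f g)
  case (Suc n) then show ?case by (simp only: x_twist.simps Suc.IH) (simp add: algebra_simps)
qed simp

lemma x_twist_scale: "x_twist (\<lambda>k. c * f k) n = c * x_twist f n"
proof (induction n arbitrary: f)
  case (Suc n) then show ?case by (simp only: x_twist.simps Suc.IH) (simp add: algebra_simps)
qed simp

lemma x_twist_shift: "x_twist (\<lambda>k. f (Suc k)) = (\<lambda>n. fps_X * x_twist f n - x_twist f (Suc n))"
  by simp

lemma x_twist_involution: "x_twist (x_twist f) = f"
proof
  fix n show "x_twist (x_twist f) n = f n"
    by (induction n arbitrary: f) (simp_all add: x_twist_diff x_twist_scale)
qed

lemma phi_ser_shuffle_x_ser: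
  "phi_ser (shuffle A (x_ser f)) w = - shuffle geom_x (ycontr (conc A (y_conc (x_ser (x_twist f))))) w"
proof (induction w arbitrary: A f)
  case Nil
  show ?case by (simp add: conc_Cons)
next
  case (Cons a w)
  let ?R = "\<lambda>A g. shuffle geom_x (ycontr (conc A (y_conc (x_ser g)))) w"
  show ?case
  proof (cases a)
    case X
    have "shuffle geom_x (ycontr (conc A (y_conc (x_ser (x_twist f))))) (X # w) =
        fps_X * ?R A (x_twist f) + ?R (\<lambda>v. A (X # v)) (x_twist f)
      - ?R A (\<lambda>n. x_twist f (Suc n))"
      by (simp add: shuffle_Cons conc_Cons conc_snoc y_conc_snoc del: x_twist.simps)
    moreover have "?R A (x_twist (\<lambda>n. f (Suc n))) = fps_X * ?R A (x_twist f) - ?R A (\<lambda>n. x_twist f (Suc n))"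
      by (simp add: x_twist_shift x_ser_linear y_conc_linear del: x_twist.simps)
    ultimately show ?thesis
      by (simp add: X shuffle_Cons Cons.IH del: x_twist.simps)
  next
    case Y
    have "shuffle geom_x (ycontr (conc A (y_conc (x_ser (x_twist f))))) (Y # w) =
        ?R (\<lambda>v. A (Y # v)) (x_twist f) + f 0 * shuffle geom_x (ycontr A) w"
      by (simp add: shuffle_Cons conc_Cons conc_snoc y_conc_snoc)
    then show ?thesis
      by (simp add: Y shuffle_Cons Cons.IH ycontr_shuffle)
  qed
qed

lemma phi_ser_shuffle_move_y_block:
  "phi_ser (shuffle A (conc B (y_conc (x_ser f)))) w =
   phi_ser (shuffle (conc A (y_conc (x_ser (x_twist f)))) B) w"
proof (induction w arbitrary: A B)
  case Nil
  show ?case by simp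
next
  case (Cons a w)
  show ?case
  proof (cases a)
    case X
    then show ?thesis by (simp add: shuffle_Cons conc_Cons Cons.IH)
  next
    case Y
    \<comment> \<open>the \<open>ycontr\<close>-corrections on the two sides are the two instances of
      \<open>phi_ser_shuffle_x_ser\<close> for the pair \<open>f\<close>, \<open>x_twist f\<close>\<close>
    have "phi_ser (shuffle (x_ser (x_twist f)) B) w =
        - shuffle geom_x (ycontr (conc B (y_conc (x_ser f)))) w"
      using phi_ser_shuffle_x_ser[of B "x_twist f"] by (simp add: shuffle_commute x_twist_involution)
    then show ?thesis
      by (simp add: Y shuffle_Cons conc_Cons ycontr_shuffle Cons.IH phi_ser_shuffle_x_ser algebra_simps)
  qed
qed

definition kron :: "nat \<Rightarrow> nat \<Rightarrow> rat fps" where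
  "kron j = (\<lambda>n. if n = j then 1 else 0)"

text \<open>By \<open>fps_nth_dual_block\<close>, \<open>dual_block m\<close> is the sum of \<open>(-1)^m binom(m+l-1, l) t^l z_(m+l)\<close>
  over all \<open>l\<close>.\<close>
definition dual_block :: "nat \<Rightarrow> ser" where
  "dual_block m = y_conc (x_ser (x_twist (kron (m - 1))))"

fun dual_blocks :: "nat list \<Rightarrow> ser" where
  "dual_blocks [] = mon_ser []"
| "dual_blocks (k # ks) = conc (dual_blocks ks) (dual_block k)"

lemma dual_blocks_snoc: "dual_blocks (ms @ [m]) = conc (dual_block m) (dual_blocks ms)"
  by (induction ms) (simp_all add: conc_assoc)

lemma zw_Nil[simp]: "zw [] = []"
  by (simp add: zw_def)

lemma zw_Cons: "zw (q # qs) = Y # replicate (q - 1) X @ zw qs"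
  by (simp add: zw_def)

lemma zw_append: "zw (qs @ rs) = zw qs @ zw rs"
  by (simp add: zw_def)

lemma mon_ser_zw_single: "mon_ser (zw [m]) = y_conc (x_ser (kron (m - 1)))"
  by (auto simp: fun_eq_iff zw_def mon_ser_def y_conc_def x_ser_def kron_def
           split: list.splits letter.splits)

lemma phi_ser_shuffle_move_index:
  "phi_ser (shuffle A (conc B (mon_ser (zw ms)))) w = phi_ser (shuffle (conc A (dual_blocks ms)) B) w"
proof (induction ms arbitrary: A B rule: rev_induct)
  case (snoc m ms)
  have "conc B (mon_ser (zw (ms @ [m]))) = conc (conc B (mon_ser (zw ms))) (y_conc (x_ser (kron (m - 1))))"
    by (simp add: zw_append conc_mon_ser[symmetric] mon_ser_zw_single conc_assoc)
  then have "phi_ser (shuffle A (conc B (mon_ser (zw (ms @ [m]))))) w =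
      phi_ser (shuffle (conc A (dual_block m)) (conc B (mon_ser (zw ms)))) w"
    by (simp add: phi_ser_shuffle_move_y_block dual_block_def)
  also have "\<dots> = phi_ser (shuffle (conc (conc A (dual_block m)) (dual_blocks ms)) B) w"
    by (rule snoc.IH)
  finally show ?case
    by (simp add: dual_blocks_snoc conc_assoc)
qed simp

lemma phi_ser_shuffle_mon_ser_zw:
  "phi_ser (shuffle (mon_ser p) (mon_ser (zw ls))) = phi_ser (conc (mon_ser p) (dual_blocks ls))"
  using phi_ser_shuffle_move_index[of "mon_ser p" "mon_ser []" ls] by (simp add: fun_eq_iff)

section \<open>The value of \<open>phi_ser\<close> on a word\<close>

lemma kron_shift: "(\<lambda>k. kron j (Suc k)) = (if j = 0 then (\<lambda>k. 0) else kron (j - 1))"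
  by (auto simp: fun_eq_iff kron_def)

lemma x_ser_kron: "x_ser (kron j) = mon_ser (replicate j X)"
  by (auto simp: fun_eq_iff mon_ser_def x_ser_def kron_def)

definition binom_t :: "nat \<Rightarrow> nat \<Rightarrow> rat fps" where
  "binom_t j n = (if j \<le> n then of_nat (n choose j) * fps_X ^ (n - j) else 0)"

lemma binom_t_Suc:
  "binom_t j (Suc n) = fps_X * binom_t j n + (if j = 0 then 0 else binom_t (j - 1) n)"
proof (cases j)
  case (Suc i)
  show ?thesis
  proof (cases "Suc i \<le> n")
    case True
    then obtain d where "n = Suc i + d" by (metis le_add_diff_inverse)
    then show ?thesis using Suc by (simp add: binom_t_def algebra_simps)
  next
    case False
    then show ?thesis using Suc by (cases "i = n") (auto simp: binom_t_def)
  qed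
qed (simp add: binom_t_def)

lemma x_twist_zero: "x_twist (\<lambda>k. 0) n = 0"
  by (induction n) simp_all

lemma x_twist_kron: "x_twist (kron j) n = - ((-1) ^ j * binom_t j n)"
proof (induction n arbitrary: j)
  case 0 then show ?case by (simp add: kron_def binom_t_def)
next
  case (Suc n) then show ?case
    by (cases j) (simp_all add: kron_shift x_twist_zero binom_t_Suc algebra_simps)
qed

lemma shuffle_geom_x_kron: "shuffle geom_x (x_ser (kron j)) w = x_ser (binom_t j) w"
proof (induction w arbitrary: j)
  case Nil then show ?case by (simp add: kron_def binom_t_def)
next
  case (Cons a w) then show ?case
    by (cases a; cases j) (simp_all add: shuffle_Cons kron_shift binom_t_Suc x_ser_linear)
qed

lemma x_ser_x_twist_kron:
  "x_ser (x_twist (kron j)) = (\<lambda>w. - ((-1) ^ j * shuffle geom_x (x_ser (kron j)) w))"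
  by (simp add: fun_eq_iff shuffle_geom_x_kron x_ser_def x_twist_kron)

definition antipode :: "word \<Rightarrow> ser" where
  "antipode u = (\<lambda>w. (-1) ^ length u * mon_ser (rev u) w)"

lemma antipode_append: "antipode (p @ q) = conc (antipode q) (antipode p)"
  by (simp add: fun_eq_iff antipode_def conc_mon_ser power_add mult_ac)

lemma antipode_mid: "antipode (p @ Y # q) = (\<lambda>w. - conc (antipode q) (y_conc (antipode p)) w)"
proof -
  have "antipode (p @ Y # q) = conc (antipode q) (conc (antipode [Y]) (antipode p))"
    using antipode_append[of p "[Y] @ q"] antipode_append[of "[Y]" q] by (simp add: conc_assoc)
  moreover have "antipode [Y] = (\<lambda>w. - mon_ser [Y] w)"
    by (simp add: antipode_def)
  ultimately show ?thesis by (simp add: conc_y)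
qed

lemma antipode_replicate_X: "antipode (replicate j X) = (\<lambda>w. (-1) ^ j * x_ser (kron j) w)"
  by (simp add: antipode_def x_ser_kron)

lemma shuffle_geom_x_conc_y:
  "shuffle geom_x (conc P (y_conc Q)) = conc (shuffle geom_x P) (y_conc (shuffle geom_x Q))"
proof
  fix w show "shuffle geom_x (conc P (y_conc Q)) w = conc (shuffle geom_x P) (y_conc (shuffle geom_x Q)) w"
  proof (induction w arbitrary: P Q)
    case (Cons a w) then show ?case
      by (cases a) (simp_all add: shuffle_Cons conc_Cons algebra_simps)
  qed simp
qed

definition y_initial :: "word \<Rightarrow> bool" where
  "y_initial u \<longleftrightarrow> u = [] \<or> hd u = Y"

text \<open>The inverse of \<open>zw\<close> on \<open>y\<close>-initial words; on an \<open>x\<close>-initial word it drops the leading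
  \<open>x\<close>'s, a junk value that never contributes below.\<close>
function blocks :: "word \<Rightarrow> nat list" where
  "blocks [] = []"
| "blocks (Y # w) = Suc (length (takeWhile (\<lambda>c. c = X) w)) # blocks (dropWhile (\<lambda>c. c = X) w)"
| "blocks (X # w) = blocks w"
  by pat_completeness auto
termination by (relation "measure length") (auto simp: le_imp_less_Suc length_dropWhile_le)

lemma takeWhile_X: "takeWhile (\<lambda>c. c = X) u = replicate (length (takeWhile (\<lambda>c. c = X) u)) X"
  by (induction u) (auto elim: letter.exhaust)

lemma y_initial_dropWhile_X: "y_initial (dropWhile (\<lambda>c. c = X) u)"
proof (induction u)
  case (Cons c u) then show ?case by (cases c) (auto simp: y_initial_def)
qed (simp add: y_initial_def)

lemma split_X_prefix:
  obtains j r where "u = replicate j X @ r" "y_initial r"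
    "blocks (Y # u) = Suc j # blocks r"
  using takeWhile_X[of u] takeWhile_dropWhile_id[of "\<lambda>c. c = X" u] y_initial_dropWhile_X[of u]
  by (metis blocks.simps(2))

lemma dual_blocks_Nil: "dual_blocks ks [] = (if ks = [] then 1 else 0)"
  by (induction ks) (simp_all add: mon_ser_def dual_block_def)

lemma dual_blocks_X: "(\<lambda>v. dual_blocks ks (X # v)) = (\<lambda>v. 0)"
proof (induction ks)
  case Nil then show ?case by (simp add: mon_ser_def)
next
  case (Cons k ks) then show ?case by (simp add: fun_eq_iff conc_Cons dual_block_def)
qed

lemma dual_blocks_Y_blocks:
  "(\<lambda>v. dual_blocks (blocks (Y # u)) (Y # v)) = (\<lambda>v. - shuffle geom_x (antipode u) v)"
proof (induction "length u" arbitrary: u rule: less_induct)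
  case less
  obtain j r where u: "u = replicate j X @ r" and r: "y_initial r" and bl: "blocks (Y # u) = Suc j # blocks r"
    by (rule split_X_prefix)
  consider "r = []" | r' where "r = Y # r'" using r by (cases r) (auto simp: y_initial_def)
  then show ?case
  proof cases
    case 1
    then show ?thesis unfolding bl u
      by (simp add: conc_Cons dual_blocks_Nil x_ser_x_twist_kron antipode_replicate_X dual_block_def mon_ser_def)
  next
    case 2
    have IH: "(\<lambda>v. dual_blocks (blocks r) (Y # v)) = (\<lambda>v. - shuffle geom_x (antipode r') v)"
      using less[of r'] u 2 by simp
    have "blocks r \<noteq> []" using 2 by simp
    then have "(\<lambda>v. dual_blocks (blocks (Y # u)) (Y # v)) =
        conc (\<lambda>v. dual_blocks (blocks r) (Y # v)) (dual_block (Suc j))"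
      unfolding bl by (simp add: fun_eq_iff conc_Cons dual_blocks_Nil del: blocks.simps)
    then show ?thesis
      unfolding IH unfolding u 2
      by (simp add: x_ser_x_twist_kron antipode_replicate_X antipode_mid shuffle_geom_x_conc_y
                    dual_block_def y_conc_linear del: blocks.simps)
  qed
qed

definition ycontr_word :: "word \<Rightarrow> ser" where
  "ycontr_word w = (\<lambda>v. \<Sum>i<length w.
     if w ! i = Y then shuffle (mon_ser (take i w)) (antipode (drop (Suc i) w)) v else 0)"

lemma antipode_snoc_deriv:
  "(\<lambda>u. antipode (q @ [c]) (b # u)) = (if c = b then (\<lambda>u. - antipode q u) else (\<lambda>u. 0))"
  "(\<lambda>u. antipode [] (b # u)) = (\<lambda>u. 0)"
  by (auto simp: fun_eq_iff antipode_def mon_ser_def)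

lemma ycontr_word_deriv_prefix:
  "(\<Sum>i<length w. if w ! i = Y then
      shuffle (\<lambda>u. mon_ser (take i w) (b # u)) (antipode (drop (Suc i) w)) v else 0)
   = (if w \<noteq> [] \<and> hd w = b then ycontr_word (tl w) v else 0)"
  by (cases w) (simp_all add: sum.lessThan_Suc_shift mon_ser_Cons_deriv ycontr_word_def
                         del: sum.lessThan_Suc cong: if_cong)

lemma ycontr_word_deriv_suffix:
  "(\<Sum>i<length w. if w ! i = Y then
      shuffle (mon_ser (take i w)) (\<lambda>u. antipode (drop (Suc i) w) (b # u)) v else 0)
   = (if w \<noteq> [] \<and> last w = b then - ycontr_word (butlast w) v else 0)"
proof (cases w rule: rev_cases)
  case (snoc w' c)
  have "(\<Sum>i<length w'. if (w' @ [c]) ! i = Y then shuffle (mon_ser (take i (w' @ [c])))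
          (\<lambda>u. antipode (drop (Suc i) (w' @ [c])) (b # u)) v else 0)
     = (\<Sum>i<length w'. if c = b then - (if w' ! i = Y then
          shuffle (mon_ser (take i w')) (antipode (drop (Suc i) w')) v else 0) else 0)"
  proof (rule sum.cong)
    fix i assume "i \<in> {..<length w'}"
    then have "i < length w'" by simp
    moreover have "drop (Suc i) (w' @ [c]) = drop (Suc i) w' @ [c]"
      using \<open>i < length w'\<close> by simp
    ultimately show "(if (w' @ [c]) ! i = Y then shuffle (mon_ser (take i (w' @ [c])))
          (\<lambda>u. antipode (drop (Suc i) (w' @ [c])) (b # u)) v else 0)
      = (if c = b then - (if w' ! i = Y then
          shuffle (mon_ser (take i w')) (antipode (drop (Suc i) w')) v else 0) else 0)"
      by (simp add: antipode_snoc_deriv nth_append)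
  qed simp
  then show ?thesis unfolding snoc
    by (cases "c = b") (simp_all add: ycontr_word_def sum_negf antipode_snoc_deriv)
qed simp

lemma ycontr_mon_ser: "ycontr (mon_ser w) = ycontr_word w"
proof
  fix v show "ycontr (mon_ser w) v = ycontr_word w v"
  proof (induction v arbitrary: w)
    case Nil
    show ?case
      by (cases w) (simp_all add: ycontr_word_def sum.lessThan_Suc_shift mon_ser_def antipode_def
                             del: sum.lessThan_Suc cong: if_cong)
  next
    case (Cons b v)
    have "ycontr_word w (b # v) =
        (\<Sum>i<length w. if w ! i = Y then
            shuffle (\<lambda>u. mon_ser (take i w) (b # u)) (antipode (drop (Suc i) w)) v else 0)
      + (\<Sum>i<length w. if w ! i = Y then
            shuffle (mon_ser (take i w)) (\<lambda>u. antipode (drop (Suc i) w) (b # u)) v else 0)"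
      unfolding ycontr_word_def by (simp add: shuffle_Cons sum.distrib[symmetric] if_distrib cong: if_cong)
    moreover have "ycontr (\<lambda>u. mon_ser w (b # u)) v =
        (if w \<noteq> [] \<and> hd w = b then ycontr_word (tl w) v else 0)"
      by (cases w) (simp_all add: mon_ser_Cons_deriv Cons.IH)
    moreover have "ycontr (\<lambda>u. mon_ser w (u @ [b])) v =
        (if w \<noteq> [] \<and> last w = b then ycontr_word (butlast w) v else 0)"
      by (cases w rule: rev_cases) (simp_all add: mon_ser_snoc_deriv Cons.IH)
    ultimately show ?case
      by (simp add: ycontr_word_deriv_prefix ycontr_word_deriv_suffix)
  qed
qed

lemma shuffle_sum_right:
  "finite I \<Longrightarrow> shuffle F (\<lambda>v. \<Sum>i\<in>I. G i v) w = (\<Sum>i\<in>I. shuffle F (G i) w)"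
  by (induction I rule: finite_induct) simp_all

lemma shuffle_if_right: "shuffle F (\<lambda>v. if c then G v else 0) w = (if c then shuffle F G w else 0)"
  by (cases c) simp_all

definition phi_word :: "word \<Rightarrow> ser" where
  "phi_word w = (\<lambda>v. \<Sum>i\<le>length w. if y_initial (drop i w)
     then shuffle (mon_ser (take i w)) (dual_blocks (blocks (drop i w))) v else 0)"

lemma phi_word_deriv_prefix:
  "(\<Sum>i\<le>length w. if y_initial (drop i w) then
      shuffle (\<lambda>u. mon_ser (take i w) (b # u)) (dual_blocks (blocks (drop i w))) v else 0)
   = (if w \<noteq> [] \<and> hd w = b then phi_word (tl w) v else 0)"
  by (cases w) (simp_all add: sum.atMost_Suc_shift mon_ser_Cons_deriv phi_word_def
                         del: sum.atMost_Suc cong: if_cong)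

lemma phi_word_deriv_suffix:
  "(\<Sum>i\<le>length w. if y_initial (drop i w) then
      shuffle (mon_ser (take i w)) (\<lambda>u. dual_blocks (blocks (drop i w)) (b # u)) v else 0)
   = (if b = Y then - shuffle geom_x (ycontr_word w) v else 0)"
proof (cases b)
  case X then show ?thesis by (simp add: dual_blocks_X cong: if_cong)
next
  case Y
  have "(\<Sum>i\<le>length w. if y_initial (drop i w) then
      shuffle (mon_ser (take i w)) (\<lambda>u. dual_blocks (blocks (drop i w)) (Y # u)) v else 0)
     = (\<Sum>i<length w. if y_initial (drop i w) then
      shuffle (mon_ser (take i w)) (\<lambda>u. dual_blocks (blocks (drop i w)) (Y # u)) v else 0)"
    unfolding lessThan_Suc_atMost[symmetric] sum.lessThan_Suc by (simp add: mon_ser_def)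
  also have "\<dots> = (\<Sum>i<length w. - (if w ! i = Y then
      shuffle geom_x (shuffle (mon_ser (take i w)) (antipode (drop (Suc i) w))) v else 0))"
  proof (rule sum.cong)
    fix i assume "i \<in> {..<length w}"
    then have d: "drop i w = w ! i # drop (Suc i) w" by (simp add: Cons_nth_drop_Suc)
    show "(if y_initial (drop i w) then
        shuffle (mon_ser (take i w)) (\<lambda>u. dual_blocks (blocks (drop i w)) (Y # u)) v else 0) =
      - (if w ! i = Y then
        shuffle geom_x (shuffle (mon_ser (take i w)) (antipode (drop (Suc i) w))) v else 0)"
      unfolding d by (cases "w ! i")
        (simp_all add: y_initial_def dual_blocks_Y_blocks shuffle_left_commute del: blocks.simps)
  qed simp
  also have "\<dots> = - shuffle geom_x (ycontr_word w) v"
    by (simp add: ycontr_word_def shuffle_sum_right shuffle_if_right sum_negf)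
  finally show ?thesis using Y by (simp cong: if_cong)
qed

lemma phi_ser_mon_ser: "phi_ser (mon_ser w) = phi_word w"
proof
  fix v show "phi_ser (mon_ser w) v = phi_word w v"
  proof (induction v arbitrary: w)
    case Nil
    show ?case
    proof (cases w)
      case (Cons a w')
      then show ?thesis
        by (cases a) (simp_all add: phi_word_def y_initial_def sum.atMost_Suc_shift mon_ser_def
                        dual_blocks_Nil dual_block_def del: sum.atMost_Suc cong: if_cong)
    qed (simp add: phi_word_def y_initial_def mon_ser_def)
  next
    case (Cons b v)
    have "phi_word w (b # v) =
        (\<Sum>i\<le>length w. if y_initial (drop i w) then
          shuffle (\<lambda>u. mon_ser (take i w) (b # u)) (dual_blocks (blocks (drop i w))) v else 0)
      + (\<Sum>i\<le>length w. if y_initial (drop i w) then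
          shuffle (mon_ser (take i w)) (\<lambda>u. dual_blocks (blocks (drop i w)) (b # u)) v else 0)"
      unfolding phi_word_def by (simp add: shuffle_Cons sum.distrib[symmetric] if_distrib cong: if_cong)
    moreover have "phi_ser (\<lambda>u. mon_ser w (b # u)) v =
        (if w \<noteq> [] \<and> hd w = b then phi_word (tl w) v else 0)"
      by (cases w) (simp_all add: mon_ser_Cons_deriv Cons.IH)
    ultimately show ?case
      by (simp add: phi_word_deriv_prefix phi_word_deriv_suffix ycontr_mon_ser)
  qed
qed

lemma finite_words_length_le: "finite {u :: word. length u \<le> n}"
proof -
  have "(UNIV :: letter set) = {X, Y}"
    using letter.exhaust by auto
  then have "finite {ws. set ws \<subseteq> (UNIV :: letter set) \<and> length ws \<le> n}"
    by (intro finite_lists_length_le) (metis finite.emptyI finite_insert)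
  then show ?thesis by simp
qed

lemma shuffle_cong_short:
  assumes "\<And>u. length u \<le> length w \<Longrightarrow> F u = F' u" "\<And>u. length u \<le> length w \<Longrightarrow> G u = G' u"
  shows "shuffle F G w = shuffle F' G' w"
  using assms
proof (induction w arbitrary: F G F' G')
  case (Cons a w)
  have "shuffle (\<lambda>v. F (a # v)) G w = shuffle (\<lambda>v. F' (a # v)) G' w"
    "shuffle F (\<lambda>v. G (a # v)) w = shuffle F' (\<lambda>v. G' (a # v)) w"
    by (rule Cons.IH; auto intro: Cons.prems)+
  then show ?case by (simp add: shuffle_Cons)
qed simp

lemma ycontr_cong_short:
  "(\<And>u. length u \<le> Suc (length w) \<Longrightarrow> F u = F' u) \<Longrightarrow> ycontr F w = ycontr F' w"
proof (induction w arbitrary: F F')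
  case (Cons a w)
  have "ycontr (\<lambda>v. F (a # v)) w = ycontr (\<lambda>v. F' (a # v)) w"
    "ycontr (\<lambda>v. F (v @ [a])) w = ycontr (\<lambda>v. F' (v @ [a])) w"
    by (rule Cons.IH; auto intro: Cons.prems)+
  then show ?case by simp
qed simp

lemma phi_ser_cong_short:
  "(\<And>u. length u \<le> length w \<Longrightarrow> F u = F' u) \<Longrightarrow> phi_ser F w = phi_ser F' w"
proof (induction w arbitrary: F F')
  case (Cons a w)
  have "phi_ser (\<lambda>v. F (a # v)) w = phi_ser (\<lambda>v. F' (a # v)) w"
    by (rule Cons.IH) (auto intro: Cons.prems)
  moreover have "shuffle geom_x (ycontr F) w = shuffle geom_x (ycontr F') w"
    by (rule shuffle_cong_short) (auto intro!: ycontr_cong_short Cons.prems)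
  ultimately show ?case by simp
qed simp

lemma sum_mon_ser:
  assumes "finite W" "v \<in> W"
  shows "(\<Sum>u\<in>W. F u * mon_ser u v) = F v"
  using assms by (simp add: mon_ser_def if_distrib[of "(*) _"] sum.delta' cong: if_cong)

lemma phi_ser_expand:
  "phi_ser F w = (\<Sum>u\<in>{u. length u \<le> length w}. F u * phi_ser (mon_ser u) w)"
proof -
  have "phi_ser F w = phi_ser (\<lambda>v. \<Sum>u\<in>{u. length u \<le> length w}. F u * mon_ser u v) w"
    by (rule phi_ser_cong_short) (simp add: sum_mon_ser finite_words_length_le)
  also have "\<dots> = (\<Sum>u\<in>{u. length u \<le> length w}. F u * phi_ser (mon_ser u) w)"
    using finite_words_length_le by (induction rule: finite_induct) simp_all
  finally show ?thesis .
qed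

lemma shuffle_expand_right:
  "shuffle F G w = (\<Sum>v\<in>{v. length v \<le> length w}. G v * shuffle F (mon_ser v) w)"
proof -
  have "shuffle F G w = shuffle F (\<lambda>x. \<Sum>v\<in>{v. length v \<le> length w}. G v * mon_ser v x) w"
    by (rule shuffle_cong_short) (simp_all add: sum_mon_ser finite_words_length_le)
  also have "\<dots> = (\<Sum>v\<in>{v. length v \<le> length w}. G v * shuffle F (mon_ser v) w)"
    by (simp add: shuffle_sum_right finite_words_length_le)
  finally show ?thesis .
qed

lemma phi_ser_mon_ser_long: "length w < length u \<Longrightarrow> phi_ser (mon_ser u) w = 0"
  using phi_ser_cong_short[of w "mon_ser u" "\<lambda>v. 0"] by (force simp: mon_ser_def)

lemma length_shw_rev: "x \<in> set (shw_rev U V) \<Longrightarrow> length x = length U + length V"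
  by (induction U V arbitrary: x rule: shw_rev.induct) auto

lemma count_list_map_rev: "count_list (map rev ys) w = count_list ys (rev w)"
  by (induction ys) auto

lemma count_list_map_Cons:
  "count_list (map ((#) b) ys) (a # w) = (if b = a then count_list ys w else 0)"
  by (induction ys) auto

lemma shw_rev_Nil_right: "shw_rev u [] = [u]"
  by (cases u) auto

lemma count_shw_rev_Cons: "count_list (shw_rev U V) (a # W) =
   (case U of [] \<Rightarrow> 0 | b # U' \<Rightarrow> if b = a then count_list (shw_rev U' V) W else 0)
 + (case V of [] \<Rightarrow> 0 | c # V' \<Rightarrow> if c = a then count_list (shw_rev U V') W else 0)"
  by (cases U; cases V) (auto simp: count_list_map_Cons shw_rev_Nil_right)

lemma count_shw_rev_Nil: "count_list (shw_rev U V) [] = (if U = [] \<and> V = [] then 1 else 0)"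
proof (cases "U = [] \<and> V = []")
  case False
  then have "[] \<notin> set (shw_rev U V)" using length_shw_rev by fastforce
  then show ?thesis using False by (simp add: count_list_0_iff)
qed simp

lemma shuffle_mon_ser: "shuffle (mon_ser u) (mon_ser v) w = of_nat (count_list (shw u v) w)"
proof (induction w arbitrary: u v rule: rev_induct)
  case Nil
  show ?case by (simp add: shw_def count_list_map_rev count_shw_rev_Nil mon_ser_def)
next
  case (snoc a w)
  have "shuffle (\<lambda>x. mon_ser u (x @ [a])) (mon_ser v) w = (case rev u of [] \<Rightarrow> 0
      | b # U' \<Rightarrow> if b = a then of_nat (count_list (shw (rev U') v) w) else 0)"
    "shuffle (mon_ser u) (\<lambda>x. mon_ser v (x @ [a])) w = (case rev v of [] \<Rightarrow> 0
      | b # V' \<Rightarrow> if b = a then of_nat (count_list (shw u (rev V')) w) else 0)"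
    by (cases u rule: rev_cases, simp_all add: mon_ser_snoc_deriv snoc.IH)
       (cases v rule: rev_cases, simp_all add: mon_ser_snoc_deriv snoc.IH)
  then show ?case
    unfolding shuffle_snoc by (simp add: shw_def count_list_map_rev count_shw_rev_Cons split: list.splits)
qed

lemma length_shw: "count_list (shw p v) w \<noteq> 0 \<Longrightarrow> length w = length p + length v"
  by (auto simp: shw_def count_list_0_iff dest: length_shw_rev)

lemma y_initial_shw:
  assumes "y_initial p" "y_initial q" "count_list (shw p q) u \<noteq> 0"
  shows "y_initial u"
proof (rule ccontr)
  assume "\<not> y_initial u"
  then obtain w where u: "u = X # w"
    by (cases u) (auto simp: y_initial_def elim: letter.exhaust)
  have "(\<lambda>v. mon_ser p (X # v)) = (\<lambda>v. 0)" "(\<lambda>v. mon_ser q (X # v)) = (\<lambda>v. 0)"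
    using assms(1,2) by (auto simp: fun_eq_iff mon_ser_def y_initial_def)
  then have "shuffle (mon_ser p) (mon_ser q) u = 0"
    by (simp add: u shuffle_Cons)
  with assms(3) show False by (simp add: shuffle_mon_ser)
qed

abbreviation positive :: "nat list \<Rightarrow> bool" where
  "positive qs \<equiv> \<forall>k\<in>set qs. 0 < k"

lemma y_initial_zw: "y_initial (zw qs)"
  by (cases qs) (auto simp: y_initial_def zw_Cons)

lemma blocks_zw: "positive qs \<Longrightarrow> blocks (zw qs) = qs"
proof (induction qs)
  case (Cons q qs)
  have "takeWhile (\<lambda>c. c = X) (replicate m X @ zw qs) = replicate m X"
    "dropWhile (\<lambda>c. c = X) (replicate m X @ zw qs) = zw qs" for m
    using y_initial_zw[of qs] by (induction m) (cases "zw qs"; auto simp: y_initial_def)+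
  then show ?case using Cons by (simp add: zw_Cons)
qed simp

lemma zw_blocks: "y_initial u \<Longrightarrow> zw (blocks u) = u \<and> positive (blocks u)"
proof (induction "length u" arbitrary: u rule: less_induct)
  case less
  show ?case
  proof (cases u)
    case (Cons c u')
    then have "c = Y" using less.prems by (simp add: y_initial_def)
    obtain j r where u': "u' = replicate j X @ r" and "y_initial r" and bl: "blocks (Y # u') = Suc j # blocks r"
      by (rule split_X_prefix)
    moreover have "length r < length u" using Cons u' by simp
    ultimately have "zw (blocks r) = r \<and> positive (blocks r)" using less by blast
    then show ?thesis using Cons \<open>c = Y\<close> bl u' by (simp add: zw_Cons)
  qed simp
qed

lemma idx_zw: "positive qs \<Longrightarrow> idx (zw qs) = qs"
  unfolding idx_def by (rule the_equality) (auto dest: arg_cong[of _ _ blocks] simp: blocks_zw)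

lemma sum_atMost_add_split: "(\<Sum>i\<le>m + (k::nat). g i) = (\<Sum>i<m. g i) + (\<Sum>i\<le>k. g (m + i))"
  by (induction k) (simp_all add: lessThan_Suc_atMost[symmetric] add.assoc)

lemma sum_y_initial_cuts_zw:
  "positive qs \<Longrightarrow> (\<Sum>i\<le>length (zw qs). if y_initial (drop i (zw qs))
       then h (take i (zw qs)) (drop i (zw qs)) else 0)
     = (\<Sum>j\<le>length qs. h (zw (take j qs)) (zw (drop j qs)))"
proof (induction qs arbitrary: h)
  case (Cons q qs)
  then obtain m where q: "q = Suc m" and p: "positive qs" by (auto dest: gr0_implies_Suc)
  let ?Z = "zw qs"
  have zq: "zw (q # qs) = Y # replicate m X @ ?Z" by (simp add: zw_Cons q)
  let ?f = "\<lambda>i. if y_initial (drop i (zw (q # qs)))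
              then h (take i (zw (q # qs))) (drop i (zw (q # qs))) else 0"
  have "(\<Sum>i\<le>length (zw (q # qs)). ?f i) = ?f 0 + (\<Sum>i\<le>m + length ?Z. ?f (Suc i))"
    unfolding zq by (simp add: sum.atMost_Suc_shift del: sum.atMost_Suc)
  also have "\<dots> = ?f 0 + (\<Sum>i<m. ?f (Suc i)) + (\<Sum>i\<le>length ?Z. ?f (Suc (m + i)))"
    by (simp add: sum_atMost_add_split add.assoc)
  also have "(\<Sum>i<m. ?f (Suc i)) = 0"
  proof (rule sum.neutral, intro ballI)
    fix i assume "i \<in> {..<m}"
    then have "drop (Suc i) (zw (q # qs)) = X # replicate (m - Suc i) X @ ?Z"
      unfolding zq by (simp add: Suc_diff_Suc[symmetric])
    then show "?f (Suc i) = 0" by (simp add: y_initial_def)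
  qed
  also have "(\<Sum>i\<le>length ?Z. ?f (Suc (m + i))) =
      (\<Sum>i\<le>length ?Z. if y_initial (drop i ?Z) then h (Y # replicate m X @ take i ?Z) (drop i ?Z) else 0)"
    unfolding zq by (simp cong: if_cong)
  also have "\<dots> = (\<Sum>j\<le>length qs. h (Y # replicate m X @ zw (take j qs)) (zw (drop j qs)))"
    using Cons.IH[OF p, of "\<lambda>a b. h (Y # replicate m X @ a) b"] by simp
  finally show ?case
    by (simp add: sum.atMost_Suc_shift zq zw_Cons q y_initial_def del: sum.atMost_Suc)
qed (simp add: y_initial_def)

lemma phi_ser_mon_ser_zw:
  "positive qs \<Longrightarrow>
   phi_ser (mon_ser (zw qs)) v = (\<Sum>j\<le>length qs. shuffle (mon_ser (zw (take j qs))) (dual_blocks (drop j qs)) v)"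
  unfolding phi_ser_mon_ser phi_word_def
  by (simp add: sum_y_initial_cuts_zw[where h = "\<lambda>a b. shuffle (mon_ser a) (dual_blocks (blocks b)) v"]
                blocks_zw in_set_dropD)

section \<open>Coefficients and comparison with \<open>phihat\<close>\<close>

lemma fps_nth_neg_one_power_mult: "fps_nth ((-1 :: rat fps) ^ j * f) l = (-1) ^ j * fps_nth f l"
proof -
  have "(-1 :: rat fps) ^ j = fps_const ((-1) ^ j)"
    by (simp flip: fps_const_neg fps_const_power)
  then show ?thesis by simp
qed

lemma fps_nth_dual_block:
  assumes "0 < k"
  shows "fps_nth (dual_block k u) l =
    (if u = zw [k + l] then (-1) ^ k * of_nat (k + l - 1 choose l) else 0)"
proof (cases "\<exists>m. u = Y # replicate m X")
  case True
  then obtain m where u: "u = Y # replicate m X" by blast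
  obtain j where kj: "k = Suc j" using assms gr0_implies_Suc by blast
  have eq: "(u = zw [k + l]) = (j \<le> m \<and> l = m - j)"
    unfolding u kj by (auto simp: zw_def)
  have "(k + l - 1) choose l = m choose j" if "m = j + l"
    using binomial_symmetric[of l m] that kj by simp
  then show ?thesis
    unfolding u kj dual_block_def eq[unfolded u kj]
    by (auto simp: x_ser_def x_twist_kron fps_nth_neg_one_power_mult binom_t_def)
next
  case False
  then have "dual_block k u = 0"
    unfolding dual_block_def y_conc_def x_ser_def by (auto split: list.splits letter.splits)
  moreover have "u \<noteq> zw [k + l]" using False by (auto simp: zw_def)
  ultimately show ?thesis by simp
qed

lemma finite_tuples: "finite (tuples r n)"
proof -
  have "tuples r n \<subseteq> {ls. set ls \<subseteq> {..n} \<and> length ls = r}"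
    by (auto simp: tuples_def dest: member_le_sum_list)
  moreover have "finite {ls. set ls \<subseteq> {..n::nat} \<and> length ls = r}"
    by (rule finite_lists_length_eq) simp
  ultimately show ?thesis by (rule finite_subset)
qed

lemma sum_tuples_Suc:
  "(\<Sum>ls\<in>tuples (Suc r) n. f ls) = (\<Sum>l0\<le>n. \<Sum>ls\<in>tuples r (n - l0). f (l0 # ls))"
proof -
  have "(\<Sum>ls\<in>tuples (Suc r) n. f ls) = (\<Sum>p\<in>(SIGMA l0:{..n}. tuples r (n - l0)). f (fst p # snd p))"
    by (rule sum.reindex_bij_witness[where i="\<lambda>p. fst p # snd p" and j="\<lambda>ls. (hd ls, tl ls)"])
       (auto simp: tuples_def length_Suc_conv)
  also have "\<dots> = (\<Sum>l0\<le>n. \<Sum>ls\<in>tuples r (n - l0). f (l0 # ls))"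
    by (subst sum.Sigma) (auto simp: finite_tuples case_prod_beta)
  finally show ?thesis .
qed

lemma sum_split_points:
  "(\<Sum>i\<le>length v. if take i v = A \<and> drop i v = B then (c::'a::comm_monoid_add) else 0) =
   (if v = A @ B then c else 0)"
proof -
  have "(take i v = A \<and> drop i v = B) = (i = length A \<and> v = A @ B)" if "i \<le> length v" for i
    using that by (metis append_eq_conv_conj append_take_drop_id length_take min.absorb2)
  then have "(\<Sum>i\<le>length v. if take i v = A \<and> drop i v = B then c else 0) =
      (\<Sum>i\<le>length v. if i = length A then (if v = A @ B then c else 0) else 0)"
    by (intro sum.cong) auto
  then show ?thesis by auto
qed

text \<open>The coefficient of \<open>t^n\<close> in the inner sum over \<open>l\<close> in the definition of \<open>\<phi>\<close>-hat.\<close>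
definition dual_coeff :: "nat list \<Rightarrow> nat \<Rightarrow> word \<Rightarrow> rat" where
  "dual_coeff ds n v =
     (-1) ^ wt ds * (\<Sum>ls\<in>tuples (length ds) n. of_nat (bb ds ls) * mon (zw (rev (ladd ds ls))) v)"

lemma tuples_0: "tuples 0 n = (if n = 0 then {[]} else {})"
  by (auto simp: tuples_def)

lemma dual_coeff_Nil: "dual_coeff [] n v = (if n = 0 \<and> v = [] then 1 else 0)"
  by (simp add: dual_coeff_def tuples_0 wt_def bb_def ladd_def mon_def)

lemma dual_coeff_Cons: "dual_coeff (k # ds) n v = (\<Sum>a\<le>n. \<Sum>ls\<in>tuples (length ds) a.
    if v = zw (rev (ladd ds ls)) @ zw [k + (n - a)]
    then (-1) ^ (k + wt ds) * of_nat (bb ds ls) * of_nat (k + (n - a) - 1 choose (n - a)) else 0)"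
  (is "_ = ?R")
proof -
  have "dual_coeff (k # ds) n v = (\<Sum>l0\<le>n. \<Sum>ls\<in>tuples (length ds) (n - l0).
      (-1) ^ wt (k # ds) * (of_nat (bb (k # ds) (l0 # ls)) * mon (zw (rev (ladd (k # ds) (l0 # ls)))) v))"
    by (simp add: dual_coeff_def sum_tuples_Suc sum_distrib_left)
  also have "\<dots> = (\<Sum>a\<le>n. \<Sum>ls\<in>tuples (length ds) (n - (n - a)).
      (-1) ^ wt (k # ds) * (of_nat (bb (k # ds) ((n - a) # ls)) * mon (zw (rev (ladd (k # ds) ((n - a) # ls)))) v))"
    by (rule sum.reindex_bij_witness[of _ "\<lambda>a. n - a" "\<lambda>a. n - a"]) auto
  also have "\<dots> = ?R"
    by (intro sum.cong refl)
       (auto simp: ladd_def bb_def wt_def zw_append mon_def)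
  finally show ?thesis .
qed

lemma fps_nth_conc:
  "fps_nth (conc F G v) n =
   (\<Sum>i\<le>length v. \<Sum>a\<le>n. fps_nth (F (take i v)) a * fps_nth (G (drop i v)) (n - a))"
  by (simp add: conc_eq_sum fps_sum_nth fps_mult_nth atLeast0AtMost)

lemma fps_nth_dual_blocks: "positive ds \<Longrightarrow> fps_nth (dual_blocks ds v) n = dual_coeff ds n v"
proof (induction ds arbitrary: v n)
  case Nil
  show ?case by (simp add: mon_ser_def dual_coeff_Nil)
next
  case (Cons k ds)
  then have k: "0 < k" and IH: "\<And>v n. fps_nth (dual_blocks ds v) n = dual_coeff ds n v" by auto
  define c where "c a ls = (-1) ^ (k + wt ds) * of_nat (bb ds ls) * (of_nat (k + (n - a) - 1 choose (n - a)) :: rat)"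
    for a ls
  let ?A = "\<lambda>ls. zw (rev (ladd ds ls))" and ?T = "tuples (length ds)"
  have "fps_nth (dual_blocks (k # ds) v) n = (\<Sum>i\<le>length v. \<Sum>a\<le>n. \<Sum>ls\<in>?T a.
      if take i v = ?A ls \<and> drop i v = zw [k + (n - a)] then c a ls else 0)"
    unfolding dual_blocks.simps fps_nth_conc IH fps_nth_dual_block[OF k] dual_coeff_def
    by (intro sum.cong refl) (auto simp: sum_distrib_left sum_distrib_right mon_def c_def power_add
                                    intro!: sum.cong)
  also have "\<dots> = (\<Sum>a\<le>n. \<Sum>ls\<in>?T a. \<Sum>i\<le>length v.
      if take i v = ?A ls \<and> drop i v = zw [k + (n - a)] then c a ls else 0)"
    by (subst sum.swap) (simp add: sum.swap[of _ "{..length v}"])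
  also have "\<dots> = dual_coeff (k # ds) n v"
    unfolding sum_split_points dual_coeff_Cons c_def ..
  finally show ?case .
qed

lemma supp_mon: "supp (mon p) = {p}"
  by (auto simp: supp_def mon_def)

lemma sum_atMost_only0:
  "(\<And>m. 0 < m \<Longrightarrow> g m = 0) \<Longrightarrow> (\<Sum>m\<le>(n::nat). g m) = g 0"
  by (subst sum.mono_neutral_right[of "{..n}" "{0}"]) auto

lemma phihat_const: "phihat (const_ser P) n w = (\<Sum>u\<in>supp P. P u * phihat_idx (idx u) n w)"
  unfolding phihat_def by (subst sum_atMost_only0) (auto simp: const_ser_def supp_def)

lemma shS_const: "shS (const_ser M) G n w = sh M (G n) w"
  unfolding shS_def by (subst sum_atMost_only0) (auto simp: const_ser_def sh_def supp_def)

lemma sh_mon: "sh (mon p) Q w = (\<Sum>v\<in>supp Q. Q v * of_nat (count_list (shw p v) w))"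
  unfolding sh_def supp_mon by (simp add: mon_def)

lemma tsum_tuples_const:
  "tsum_tuples r (\<lambda>ls. const_ser (f ls)) n v = (\<Sum>ls\<in>tuples r n. f ls v)"
  unfolding tsum_tuples_def by (subst sum.mono_neutral_right[of "{..n}" "{n}"]) (auto simp: const_ser_def)

lemma shS_mon_dual_coeff:
  assumes "positive ds"
  shows "(-1) ^ wt ds * shS (const_ser (mon p)) (tsum_tuples (length ds)
      (\<lambda>ls. const_ser (\<lambda>v. of_nat (bb ds ls) * mon (zw (rev (ladd ds ls))) v))) n w
    = fps_nth (shuffle (mon_ser p) (dual_blocks ds) w) n"
proof -
  define Q where "Q = dual_coeff ds n"
  have Q: "(-1) ^ wt ds * tsum_tuples (length ds)
      (\<lambda>ls. const_ser (\<lambda>v. of_nat (bb ds ls) * mon (zw (rev (ladd ds ls))) v)) n v = Q v" for v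
    by (simp add: tsum_tuples_const Q_def dual_coeff_def)
  have "supp Q \<subseteq> (\<lambda>ls. zw (rev (ladd ds ls))) ` tuples (length ds) n"
  proof
    fix v assume "v \<in> supp Q"
    then have "(\<Sum>ls\<in>tuples (length ds) n. of_nat (bb ds ls) * mon (zw (rev (ladd ds ls))) v) \<noteq> (0::rat)"
      by (simp add: supp_def Q_def dual_coeff_def)
    then obtain ls where "ls \<in> tuples (length ds) n" "mon (zw (rev (ladd ds ls))) v \<noteq> 0"
      by (metis (mono_tags, lifting) mult_zero_right sum.neutral)
    then show "v \<in> (\<lambda>ls. zw (rev (ladd ds ls))) ` tuples (length ds) n"
      by (auto simp: mon_def split: if_splits)
  qed
  then have "finite (supp Q)"
    using finite_tuples finite_surj by blast
  have "(-1) ^ wt ds * shS (const_ser (mon p)) (tsum_tuples (length ds)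
      (\<lambda>ls. const_ser (\<lambda>v. of_nat (bb ds ls) * mon (zw (rev (ladd ds ls))) v))) n w
     = (\<Sum>v\<in>supp Q. Q v * of_nat (count_list (shw p v) w))"
    unfolding shS_const sh_mon sum_distrib_left
    by (intro sum.cong) (auto simp: supp_def Q[symmetric] sum_distrib_left mult.assoc)
  also have "\<dots> = (\<Sum>v\<in>{v. length v \<le> length w}. Q v * of_nat (count_list (shw p v) w))"
    using \<open>finite (supp Q)\<close> finite_words_length_le
    by (intro sum.mono_neutral_cong) (auto simp: supp_def, metis le_add2 length_shw)
  also have "\<dots> = fps_nth (shuffle (mon_ser p) (dual_blocks ds) w) n"
    by (simp add: shuffle_expand_right[of _ "dual_blocks ds"] fps_sum_nth shuffle_mon_ser
                  fps_nth_dual_blocks[OF assms] Q_def)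
  finally show ?thesis .
qed

lemma phihat_idx_eq_phi_ser:
  assumes "positive qs"
  shows "phihat_idx qs n w = fps_nth (phi_ser (mon_ser (zw qs)) w) n"
proof -
  have "phihat_idx qs n w =
      (\<Sum>i\<le>length qs. fps_nth (shuffle (mon_ser (zw (take i qs))) (dual_blocks (drop i qs)) w) n)"
    unfolding phihat_idx_def
    using assms by (intro sum.cong refl) (simp add: shS_mon_dual_coeff[symmetric] in_set_dropD)
  also have "\<dots> = fps_nth (phi_ser (mon_ser (zw qs)) w) n"
    by (simp add: phi_ser_mon_ser_zw[OF assms] fps_sum_nth)
  finally show ?thesis .
qed

lemma phihat_const_ser:
  assumes "finite (supp P)" "\<And>u. u \<in> supp P \<Longrightarrow> y_initial u"
  shows "phihat (const_ser P) n w = fps_nth (phi_ser (\<lambda>u. fps_const (P u)) w) n"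
proof -
  have "phihat (const_ser P) n w = (\<Sum>u\<in>supp P. P u * fps_nth (phi_ser (mon_ser u) w) n)"
    unfolding phihat_const
    using assms(2) zw_blocks idx_zw phihat_idx_eq_phi_ser by (intro sum.cong) metis+
  also have "\<dots> = (\<Sum>u\<in>{u. length u \<le> length w}. P u * fps_nth (phi_ser (mon_ser u) w) n)"
    using assms(1) finite_words_length_le
    by (intro sum.mono_neutral_cong) (auto simp: phi_ser_mon_ser_long supp_def)
  also have "\<dots> = fps_nth (phi_ser (\<lambda>u. fps_const (P u)) w) n"
    by (simp add: phi_ser_expand[of "\<lambda>u. fps_const (P u)"] fps_sum_nth)
  finally show ?thesis .
qed

lemma phihat_mon_zw:
  "positive qs \<Longrightarrow> phihat (const_ser (mon (zw qs))) n w = fps_nth (phi_ser (mon_ser (zw qs)) w) n"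
  unfolding phihat_const supp_mon by (simp add: mon_def idx_zw phihat_idx_eq_phi_ser)

lemma phihat_sh_mon_zw:
  "phihat (const_ser (sh (mon (zw ks)) (mon (zw ls)))) n w =
   fps_nth (phi_ser (shuffle (mon_ser (zw ks)) (mon_ser (zw ls))) w) n"
proof -
  have sh: "sh (mon (zw ks)) (mon (zw ls)) u = of_nat (count_list (shw (zw ks) (zw ls)) u)" for u
    unfolding sh_mon supp_mon by (simp add: mon_def)
  have "supp (sh (mon (zw ks)) (mon (zw ls))) \<subseteq> set (shw (zw ks) (zw ls))"
    by (auto simp: supp_def sh count_list_0_iff)
  moreover have "(\<lambda>u. fps_const (sh (mon (zw ks)) (mon (zw ls)) u)) = shuffle (mon_ser (zw ks)) (mon_ser (zw ls))"
    by (simp add: fun_eq_iff sh shuffle_mon_ser fps_of_nat)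
  ultimately show ?thesis
    by (subst phihat_const_ser) (auto simp: supp_def sh intro: finite_subset y_initial_shw[OF y_initial_zw y_initial_zw])
qed

lemma phi_ser_conc_dual_blocks:
  assumes "positive ls"
  shows "fps_nth (phi_ser (conc (mon_ser p) (dual_blocks ls)) w) n = (-1) ^ wt ls *
    (\<Sum>m\<le>n. \<Sum>ls'\<in>tuples (length ls) m.
       of_nat (bb ls ls') * fps_nth (phi_ser (mon_ser (p @ zw (rev (ladd ls ls')))) w) (n - m))"
proof -
  let ?W = "{u::word. length u \<le> length w}"
  let ?Q = "\<lambda>ls'. p @ zw (rev (ladd ls ls'))"
  let ?G = "\<lambda>u k. fps_nth (phi_ser (mon_ser u) w) k"
  have coeff: "fps_nth (conc (mon_ser p) (dual_blocks ls) u) m = (-1) ^ wt ls *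
      (\<Sum>ls'\<in>tuples (length ls) m. of_nat (bb ls ls') * (if u = ?Q ls' then 1 else 0))" for u m
  proof (cases "take (length p) u = p")
    case True
    then have "(drop (length p) u = B) = (u = p @ B)" for B
      by (metis append_eq_conv_conj)
    with True show ?thesis
      by (simp add: conc_mon_ser_left fps_nth_dual_blocks[OF assms] dual_coeff_def mon_def)
  next
    case False
    then have "u \<noteq> p @ B" for B by auto
    with False show ?thesis by (simp add: conc_mon_ser_left)
  qed
  have "fps_nth (phi_ser (conc (mon_ser p) (dual_blocks ls)) w) n =
      (\<Sum>u\<in>?W. \<Sum>m\<le>n. fps_nth (conc (mon_ser p) (dual_blocks ls) u) m * ?G u (n - m))"
    by (simp add: phi_ser_expand[of "conc (mon_ser p) (dual_blocks ls)"] fps_sum_nth fps_mult_nth atLeast0AtMost)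
  also have "\<dots> = (\<Sum>m\<le>n. \<Sum>ls'\<in>tuples (length ls) m. \<Sum>u\<in>?W.
      (-1) ^ wt ls * of_nat (bb ls ls') * (if u = ?Q ls' then ?G u (n - m) else 0))"
    unfolding coeff sum_distrib_left sum_distrib_right
    by (subst sum.swap) (simp add: sum.swap[of _ ?W] mult.assoc if_distrib[of "\<lambda>x. x * _"] cong: if_cong)
  also have "\<dots> = (\<Sum>m\<le>n. \<Sum>ls'\<in>tuples (length ls) m.
      (-1) ^ wt ls * of_nat (bb ls ls') * ?G (?Q ls') (n - m))"
    by (intro sum.cong refl)
       (auto simp: sum_distrib_left[symmetric] sum.delta finite_words_length_le phi_ser_mon_ser_long)
  finally show ?thesis
    by (simp add: sum_distrib_left mult.assoc)
qed

lemma tuples_length_0: "tuples r 0 = {replicate r 0}"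
  by (auto simp: tuples_def intro: replicate_eqI)

lemma bb_replicate_0: "bb ls (replicate (length ls) 0) = 1"
  by (induction ls) (simp_all add: bb_def)

lemma ladd_replicate_0: "ladd ls (replicate (length ls) 0) = ls"
  by (induction ls) (simp_all add: ladd_def)

theorem mainTheorem6:
  fixes ks ls :: "nat list"
  assumes "\<forall>k\<in>set ks. 0 < k" and "\<forall>l\<in>set ls. 0 < l"
  shows "phihat (const_ser (sh (mon (zw ks)) (mon (zw ls)))) =
           (\<lambda>n w. (- 1) ^ wt ls *
              tsum_tuples (length ls)
                (\<lambda>ls'. (\<lambda>m v. of_nat (bb ls ls') *
                   phihat (const_ser (mon (zw ks @ zw (rev (ladd ls ls'))))) m v)) n w)
       \<and> phi (sh (mon (zw ks)) (mon (zw ls))) =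
           (\<lambda>w. (- 1) ^ wt ls * phi (mon (zw ks @ zw (rev ls))) w)"
proof -
  have pos_index: "positive (ks @ rev (ladd ls ls'))" for ls'
    using assms by (auto simp: ladd_def set_zip)
  have series: "phihat (const_ser (sh (mon (zw ks)) (mon (zw ls)))) n w =
      (- 1) ^ wt ls * tsum_tuples (length ls)
        (\<lambda>ls'. (\<lambda>m v. of_nat (bb ls ls') *
           phihat (const_ser (mon (zw ks @ zw (rev (ladd ls ls'))))) m v)) n w" for n w
    unfolding phihat_sh_mon_zw phi_ser_shuffle_mon_ser_zw phi_ser_conc_dual_blocks[OF assms(2)]
    by (simp add: tsum_tuples_def zw_append[symmetric] phihat_mon_zw[OF pos_index])
  then have "phi (sh (mon (zw ks)) (mon (zw ls))) w = (- 1) ^ wt ls * phi (mon (zw ks @ zw (rev ls))) w" for w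
    by (simp add: phi_def tsum_tuples_def tuples_length_0 bb_replicate_0 ladd_replicate_0)
  with series show ?thesis by auto
qed

end
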